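(* Let $f:\Sigma\to\mathbb{S}^4_1$ be a non-isotropic conformal marginally trapped immersion with flat normal bundle, and, on a simply connected coordinate domain, let $z$, $c$, $\xi$, $h$, $u$ and the matrices $A^t$ be as in the context. Then for every $t\in\mathbb R$ the one-form $\alpha_t=A^t\,dz+\overline{A^t}\,d\bar z$ is $\mathfrak{so}(4,1)$-valued, coincides for $t=0$ with the Maurer–Cartan form $F^{-1}dF$ of the adapted frame $F$, and satisfies the Maurer–Cartan equation $d\alpha_t+\frac12[\alpha_t\wedge\alpha_t]=0$.
   Context: $\mathbb{R}^5_1$ is $\mathbb{R}^5$ with $\langle x,y\rangle=x_0y_0+x_1y_1+x_2y_2+x_3y_3-x_4y_4$ (complex-bilinearly extended), standard basis $e_0,\dots,e_4$, $\mathbb{S}^4_1=\{\langle x,x\rangle=1\}$; future pointing: $\langle X,e_4\rangle<0$. $f$ conformal spacelike immersion, $\langle f_z,f_{\bar z}\rangle=e^{2u}$; positively oriented orthonormal normal frame $\{N_1,N_2\}$ ($\langle N_1,N_1\rangle=1,\langle N_2,N_2\rangle=-1,\langle N_1,N_2\rangle=0$, $N_2$ future pointing, orientation of $\nu(f)$); $\xi_1=\langle f_{zz},N_1\rangle$, $\xi_2=-\langle f_{zz},N_2\rangle$; $\mathbf H$: $f_{z\bar z}=-e^{2u}f+e^{2u}\mathbf H$; marginally trapped: $\langle\mathbf H,\mathbf H\rangle=0$, $\mathbf H=h(N_1+N_2)$; non-isotropic: $\xi_1^2-\xi_2^2\ne0$. Setup: since the normal bundle is flat, choose $\{N_1,N_2\}$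 $\nabla^\perp$-parallel (i.e. $\langle\partial_zN_1,N_2\rangle=0$) and a coordinate $z$ with $q=(\xi_1-\xi_2)dz^2=c\,dz^2$, $c\in\mathbb R\setminus\{0\}$; write $\xi_2=\xi$, $\xi_1=\xi+c$. Let $F=(f,F_1,F_2,N_1,N_2)\in SO_+(4,1)$ (columns) with $f_z=\frac{e^u}{\sqrt2}(F_1-iF_2)$. For $t\in\mathbb R$ put $h^t=h+\frac{t}{2c}$, $a^t_1=\frac{e^{-u}(\xi+c)+e^uh^t}{\sqrt2}$, $b^t_1=\frac{e^{-u}(\xi+c)-e^uh^t}{\sqrt2}$, $a^t_2=\frac{e^{-u}\xi+e^uh^t}{\sqrt2}$, $b^t_2=\frac{e^{-u}\xi-e^uh^t}{\sqrt2}$, and let $A^t$ be the $5\times5$ matrix with rows $(0,\,-\tfrac{e^u}{\sqrt2},\,i\tfrac{e^u}{\sqrt2},\,0,\,0)$, $(\tfrac{e^u}{\sqrt2},\,0,\,iu_z,\,-a^t_1,\,a^t_2)$, $(-i\tfrac{e^u}{\sqrt2},\,-iu_z,\,0,\,-ib^t_1,\,ib^t_2)$, $(0,\,a^t_1,\,ib^t_1,\,0,\,0)$, $(0,\,a^t_2,\,ib^t_2,\,0,\,0)$. Then $A^0=F^{-1}F_z$. *)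

theory Defs
  imports "HOL-Analysis.Analysis"
begin

definition idx5 :: "5 \<Rightarrow> nat" where
  "idx5 i = (if i = 0 then 0 else if i = 1 then 1 else if i = 2 then 2 else if i = 3 then 3 else 4)"

definition sgnL :: "5 \<Rightarrow> real" where
  "sgnL i = (if i = 4 then -1 else 1)"

definition lor :: "complex^5 \<Rightarrow> complex^5 \<Rightarrow> complex" where
  "lor x y = (\<Sum>i\<in>UNIV. complex_of_real (sgnL i) * x$i * y$i)"

definition etaR :: "real^5^5" where
  "etaR = (\<chi> i j. if i = j then sgnL i else 0)"

definition SOp41 :: "real^5^5 \<Rightarrow> bool" where
  "SOp41 M \<longleftrightarrow> transpose M ** etaR ** M = etaR \<and> det M = 1 \<and> M$4$4 > 0"

definition so41 :: "real^5^5 \<Rightarrow> bool" where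
  "so41 X \<longleftrightarrow> transpose X ** etaR + etaR ** X = 0"

definition pdx :: "(complex \<Rightarrow> 'a::real_normed_vector) \<Rightarrow> complex \<Rightarrow> 'a" where
  "pdx g p = frechet_derivative g (at p) 1"

definition pdy :: "(complex \<Rightarrow> 'a::real_normed_vector) \<Rightarrow> complex \<Rightarrow> 'a" where
  "pdy g p = frechet_derivative g (at p) \<i>"

fun Ck_on :: "nat \<Rightarrow> complex set \<Rightarrow> (complex \<Rightarrow> 'a::real_normed_vector) \<Rightarrow> bool" where
  "Ck_on 0 U g = continuous_on U g"
| "Ck_on (Suc k) U g = (g differentiable_on U \<and> Ck_on k U (pdx g) \<and> Ck_on k U (pdy g))"

definition Cinf_on :: "complex set \<Rightarrow> (complex \<Rightarrow> 'a::real_normed_vector) \<Rightarrow> bool" where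
  "Cinf_on U g \<longleftrightarrow> (\<forall>k. Ck_on k U g)"

definition Dz :: "(complex \<Rightarrow> complex) \<Rightarrow> complex \<Rightarrow> complex" where
  "Dz g p = (pdx g p - \<i> * pdy g p) / 2"

definition Dzb :: "(complex \<Rightarrow> complex) \<Rightarrow> complex \<Rightarrow> complex" where
  "Dzb g p = (pdx g p + \<i> * pdy g p) / 2"

definition DzV :: "(complex \<Rightarrow> complex^5) \<Rightarrow> complex \<Rightarrow> complex^5" where
  "DzV g p = (\<chi> i. Dz (\<lambda>q. g q $ i) p)"

definition DzbV :: "(complex \<Rightarrow> complex^5) \<Rightarrow> complex \<Rightarrow> complex^5" where
  "DzbV g p = (\<chi> i. Dzb (\<lambda>q. g q $ i) p)"

definition cvf :: "(complex \<Rightarrow> real^5) \<Rightarrow> complex \<Rightarrow> complex^5" where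
  "cvf g p = (\<chi> i. complex_of_real (g p $ i))"

definition frameF :: "(complex \<Rightarrow> real^5) \<Rightarrow> (complex \<Rightarrow> real^5) \<Rightarrow> (complex \<Rightarrow> real^5) \<Rightarrow>
    (complex \<Rightarrow> real^5) \<Rightarrow> (complex \<Rightarrow> real^5) \<Rightarrow> complex \<Rightarrow> real^5^5" where
  "frameF f F1 F2 N1 N2 p = (\<chi> i j. (if j = 0 then f p else if j = 1 then F1 p else if j = 2 then F2 p
      else if j = 3 then N1 p else N2 p) $ i)"

definition Amat :: "real \<Rightarrow> (complex \<Rightarrow> complex) \<Rightarrow> (complex \<Rightarrow> real) \<Rightarrow> (complex \<Rightarrow> real)
    \<Rightarrow> real \<Rightarrow> complex \<Rightarrow> complex^5^5" where
  "Amat c \<xi> h u t p =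
    (let e = complex_of_real (exp (u p));
         ei = complex_of_real (exp (- u p));
         s = complex_of_real (sqrt 2);
         ht = complex_of_real (h p + t / (2 * c));
         uz = Dz (\<lambda>q. complex_of_real (u q)) p;
         a1 = (ei * (\<xi> p + complex_of_real c) + e * ht) / s;
         b1 = (ei * (\<xi> p + complex_of_real c) - e * ht) / s;
         a2 = (ei * \<xi> p + e * ht) / s;
         b2 = (ei * \<xi> p - e * ht) / s;
         ent = (\<lambda>r k::nat.
           [[0, - e / s, \<i> * e / s, 0, 0],
            [e / s, 0, \<i> * uz, - a1, a2],
            [- \<i> * e / s, - \<i> * uz, 0, - \<i> * b1, \<i> * b2],
            [0, a1, \<i> * b1, 0, 0],
            [0, a2, \<i> * b2, 0, 0]] ! r ! k)
     in (\<chi> i j. ent (idx5 i) (idx5 j)))"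

text \<open>Value of the real one-form alpha = A dz + conj(A) dzbar on the tangent vector v
  (identified with a complex number v = a + i b, i.e. a d/dx + b d/dy).\<close>
definition alpha :: "complex^5^5 \<Rightarrow> complex \<Rightarrow> real^5^5" where
  "alpha A v = (\<chi> i j. Re (A$i$j * v + cnj (A$i$j * v)))"

end

(* The frame F is adapted to f, so pairing the defining relations of f_z, f_zz, f_zzbar, xi_1, xi_2
   and the parallelity of N1 with the frame vectors determines every entry of F^-1 F_x and F^-1 F_y:
   they are the entries of alpha_0 = A^0 dz + conj(A^0) dzbar.  A logarithmic derivative F^-1 dF of a
   C^2 matrix function satisfies the Maurer-Cartan equation, by the symmetry of second derivatives.
   For general t, A^t = A^0 + k M with k = e^u t / (2 sqrt 2 c) and a constant matrix M whose real and
   imaginary parts commute; the part of the curvature of alpha_t that is linear in k vanishes because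
   the entries b_j of A^0 differ from a_j by the same amount for j = 1, 2 and dk = k du. *)

theory Submission
  imports Defs
begin

section \<open>Partial derivatives in the plane\<close>

definition has_partials :: "(complex \<Rightarrow> 'a::real_normed_vector) \<Rightarrow> complex \<Rightarrow> 'a \<Rightarrow> 'a \<Rightarrow> bool" where
  "has_partials g p gx gy \<longleftrightarrow> (g has_derivative (\<lambda>v. Re v *\<^sub>R gx + Im v *\<^sub>R gy)) (at p)"

lemma has_partials_imp_frechet_derivative:
  "has_partials g p gx gy \<Longrightarrow> frechet_derivative g (at p) = (\<lambda>v. Re v *\<^sub>R gx + Im v *\<^sub>R gy)"
  unfolding has_partials_def by (metis frechet_derivative_at)

lemma has_partials_imp_pdx_pdy:
  assumes "has_partials g p gx gy" shows "pdx g p = gx" "pdy g p = gy"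
  unfolding pdx_def pdy_def has_partials_imp_frechet_derivative[OF assms] by simp_all

lemma has_partials_unique: "has_partials g p gx gy \<Longrightarrow> has_partials g p gx' gy' \<Longrightarrow> gx = gx' \<and> gy = gy'"
  using has_partials_imp_pdx_pdy by metis

lemma differentiable_imp_has_partials:
  assumes "g differentiable (at p)" shows "has_partials g p (pdx g p) (pdy g p)"
proof -
  let ?D = "frechet_derivative g (at p)"
  have D: "(g has_derivative ?D) (at p)" using assms frechet_derivative_works by blast
  have "?D v = Re v *\<^sub>R ?D 1 + Im v *\<^sub>R ?D \<i>" for v
  proof -
    have "v = Re v *\<^sub>R 1 + Im v *\<^sub>R \<i>" by (simp add: complex_eq_iff)
    then have "?D v = ?D (Re v *\<^sub>R 1 + Im v *\<^sub>R \<i>)" by (rule arg_cong)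
    also have "\<dots> = Re v *\<^sub>R ?D 1 + Im v *\<^sub>R ?D \<i>"
      using has_derivative_linear[OF D] by (simp add: linear_add linear_scale)
    finally show ?thesis .
  qed
  with D show ?thesis unfolding has_partials_def pdx_def pdy_def by (metis (no_types, lifting) ext)
qed

lemma has_partials_imp_differentiable: "has_partials g p gx gy \<Longrightarrow> g differentiable (at p)"
  unfolding has_partials_def differentiable_def by blast

lemma has_partials_transform_open:
  "has_partials g p gx gy \<Longrightarrow> open U \<Longrightarrow> p \<in> U \<Longrightarrow> (\<And>q. q \<in> U \<Longrightarrow> g q = k q) \<Longrightarrow> has_partials k p gx gy"
  unfolding has_partials_def by (rule has_derivative_transform_within_open)

lemma has_partials_cong: "has_partials g p gx gy \<Longrightarrow> gx = gx' \<Longrightarrow> gy = gy' \<Longrightarrow> has_partials g p gx' gy'"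
  by simp

lemma has_partials_const: "has_partials (\<lambda>q. c) p 0 0"
  unfolding has_partials_def by simp

lemma has_partials_bounded_linear:
  assumes "bounded_linear L" "has_partials g p gx gy"
  shows "has_partials (\<lambda>q. L (g q)) p (L gx) (L gy)"
proof -
  have "((\<lambda>q. L (g q)) has_derivative (\<lambda>v. L (Re v *\<^sub>R gx + Im v *\<^sub>R gy))) (at p)"
    using bounded_linear.has_derivative[OF assms(1)] assms(2) unfolding has_partials_def by blast
  then show ?thesis
    unfolding has_partials_def using bounded_linear.linear[OF assms(1)] by (simp add: linear_add linear_scale)
qed

lemma has_partials_bounded_bilinear:
  fixes prod :: "'a::real_normed_vector \<Rightarrow> 'b::real_normed_vector \<Rightarrow> 'c::real_normed_vector"
  assumes "bounded_bilinear prod" "has_partials g p gx gy" "has_partials k p kx ky"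
  shows "has_partials (\<lambda>q. prod (g q) (k q)) p (prod (g p) kx + prod gx (k p)) (prod (g p) ky + prod gy (k p))"
proof -
  interpret prod: bounded_bilinear prod by fact
  have "((\<lambda>q. prod (g q) (k q)) has_derivative
     (\<lambda>v. prod (g p) (Re v *\<^sub>R kx + Im v *\<^sub>R ky) + prod (Re v *\<^sub>R gx + Im v *\<^sub>R gy) (k p))) (at p)"
    using prod.FDERIV assms(2,3) unfolding has_partials_def by blast
  then show ?thesis unfolding has_partials_def
    by (simp add: prod.add_left prod.add_right prod.scaleR_left prod.scaleR_right algebra_simps)
qed

lemma has_partials_add: "has_partials g p gx gy \<Longrightarrow> has_partials k p kx ky \<Longrightarrow>
    has_partials (\<lambda>q. g q + k q) p (gx + kx) (gy + ky)"
  unfolding has_partials_def by (drule (1) has_derivative_add) (simp add: algebra_simps)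

lemma has_partials_minus: "has_partials g p gx gy \<Longrightarrow> has_partials (\<lambda>q. - g q) p (- gx) (- gy)"
  unfolding has_partials_def by (drule has_derivative_minus) (simp add: algebra_simps)

lemma has_partials_mult: "has_partials g p gx gy \<Longrightarrow> has_partials k p kx ky \<Longrightarrow>
    has_partials (\<lambda>q. g q * k q) p (g p * kx + gx * k p) (g p * ky + gy * k p)"
  for g k :: "complex \<Rightarrow> 'a::real_normed_algebra"
  by (rule has_partials_bounded_bilinear[OF bounded_bilinear_mult])

lemma has_partials_scaleR: "has_partials g p gx gy \<Longrightarrow> has_partials k p kx ky \<Longrightarrow>
    has_partials (\<lambda>q. g q *\<^sub>R k q) p (g p *\<^sub>R kx + gx *\<^sub>R k p) (g p *\<^sub>R ky + gy *\<^sub>R k p)"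
  by (rule has_partials_bounded_bilinear[OF bounded_bilinear_scaleR])

lemma has_partials_vec_nth: "has_partials g p gx gy \<Longrightarrow> has_partials (\<lambda>q. g q $ i) p (gx $ i) (gy $ i)"
  by (rule has_partials_bounded_linear[OF bounded_linear_vec_nth])

lemma has_partials_of_real:
  "has_partials g p gx gy \<Longrightarrow> has_partials (\<lambda>q. of_real (g q) :: complex) p (of_real gx) (of_real gy)"
  by (rule has_partials_bounded_linear[OF bounded_linear_of_real])

lemma has_partials_exp:
  assumes "has_partials g p gx gy"
  shows "has_partials (\<lambda>q. exp (g q :: real)) p (exp (g p) * gx) (exp (g p) * gy)"
proof -
  have "(exp has_derivative (*) (exp (g p))) (at (g p))"
    using DERIV_exp[of "g p"] unfolding has_field_derivative_def .
  from has_derivative_compose[OF assms[unfolded has_partials_def] this] show ?thesis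
    unfolding has_partials_def by (simp add: algebra_simps)
qed

lemma has_partials_Complex:
  assumes "has_partials a p ax ay" "has_partials b p bx by"
  shows "has_partials (\<lambda>q. Complex (a q) (b q)) p (Complex ax bx) (Complex ay by)"
proof -
  have "has_partials (\<lambda>q. of_real (a q) + \<i> * of_real (b q)) p (of_real ax + \<i> * of_real bx) (of_real ay + \<i> * of_real by)"
    using has_partials_add[OF has_partials_of_real[OF assms(1)]
        has_partials_mult[OF has_partials_const has_partials_of_real[OF assms(2)]]] by simp
  then show ?thesis by (simp add: Complex_eq)
qed

lemma has_partials_vec:
  fixes g :: "complex \<Rightarrow> 'a::euclidean_space ^ 'n"
  assumes "\<And>i. has_partials (\<lambda>q. g q $ i) p (gx $ i) (gy $ i)"
  shows "has_partials g p gx gy"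
proof -
  have "((\<lambda>q. g q \<bullet> j) has_derivative (\<lambda>v. (Re v *\<^sub>R gx + Im v *\<^sub>R gy) \<bullet> j)) (at p)" if "j \<in> Basis" for j
  proof -
    obtain i b where j: "j = axis i b" "b \<in> Basis" using \<open>j \<in> Basis\<close> unfolding Basis_vec_def by blast
    have "((\<lambda>q. g q $ i \<bullet> b) has_derivative (\<lambda>v. (Re v *\<^sub>R gx $ i + Im v *\<^sub>R gy $ i) \<bullet> b)) (at p)"
      using bounded_linear.has_derivative[OF bounded_linear_inner_left assms[unfolded has_partials_def]] .
    then show ?thesis unfolding j inner_axis by simp
  qed
  then show ?thesis unfolding has_partials_def has_derivative_componentwise_within[of g _ p UNIV] by blast
qed

lemma Dz_Dzb_has_partials:
  "has_partials g p gx gy \<Longrightarrow> Dz g p = (gx - \<i> * gy) / 2 \<and> Dzb g p = (gx + \<i> * gy) / 2"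
  unfolding Dz_def Dzb_def using has_partials_imp_pdx_pdy by metis

lemma Ck_on_2_imp_has_partials:
  assumes "Ck_on 2 U g" "open U" "q \<in> U"
  shows "has_partials g q (pdx g q) (pdy g q)"
    "has_partials (pdx g) q (pdx (pdx g) q) (pdy (pdx g) q)"
    "has_partials (pdy g) q (pdx (pdy g) q) (pdy (pdy g) q)"
proof -
  have "g differentiable_on U" "pdx g differentiable_on U" "pdy g differentiable_on U"
    using assms(1) by (simp_all add: numeral_2_eq_2)
  then show "has_partials g q (pdx g q) (pdy g q)"
    "has_partials (pdx g) q (pdx (pdx g) q) (pdy (pdx g) q)"
    "has_partials (pdy g) q (pdx (pdy g) q) (pdy (pdy g) q)"
    using assms(2,3) differentiable_on_eq_differentiable_at differentiable_imp_has_partials by blast+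
qed

lemma DzV_cvf:
  assumes "has_partials g q gx gy"
  shows "DzV (cvf g) q = (\<chi> i. Complex (gx $ i / 2) (- gy $ i / 2))"
proof -
  have "Dz (\<lambda>p. cvf g p $ i) q = Complex (gx $ i / 2) (- gy $ i / 2)" for i
  proof -
    have "has_partials (\<lambda>p. cvf g p $ i) q (of_real (gx $ i)) (of_real (gy $ i))"
      unfolding cvf_def vec_lambda_beta by (intro has_partials_of_real has_partials_vec_nth assms)
    from Dz_Dzb_has_partials[OF this] show ?thesis by (simp add: complex_eq_iff)
  qed
  then show ?thesis unfolding DzV_def by (simp add: vec_eq_iff)
qed

lemma Dz_Dzb_Complex:
  assumes "has_partials a p ax ay" "has_partials b p bx by" "open U" "p \<in> U"
    and "\<And>q. q \<in> U \<Longrightarrow> \<psi> q = Complex (a q) (b q)"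
  shows "Dz \<psi> p = Complex ((ax + by) / 2) ((bx - ay) / 2)"
    "Dzb \<psi> p = Complex ((ax - by) / 2) ((bx + ay) / 2)"
proof -
  have "has_partials \<psi> p (Complex ax bx) (Complex ay by)"
    using has_partials_transform_open[OF has_partials_Complex[OF assms(1,2)] assms(3,4)] assms(5) by metis
  then show "Dz \<psi> p = Complex ((ax + by) / 2) ((bx - ay) / 2)"
    "Dzb \<psi> p = Complex ((ax - by) / 2) ((bx + ay) / 2)"
    using Dz_Dzb_has_partials by (simp_all add: complex_eq_iff)
qed

section \<open>Symmetry of mixed partial derivatives\<close>

lemma norm_Complex_le: "cmod (Complex a b) \<le> \<bar>a\<bar> + \<bar>b\<bar>"
  using cmod_le[of "Complex a b"] by simp

lemma has_partials_restrict_line: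
  fixes \<phi> :: "complex \<Rightarrow> real"
  assumes "has_partials \<phi> q A B" "q = z + of_real s * w"
  shows "((\<lambda>s. \<phi> (z + of_real s * w)) has_derivative (\<lambda>t. t * (Re w * A + Im w * B))) (at s within S)"
proof -
  have "((\<lambda>s::real. z + of_real s * w) has_derivative (\<lambda>t. of_real t * w)) (at s within S)"
    by (auto intro!: derivative_eq_intros)
  from has_derivative_compose[OF this assms(1)[unfolded has_partials_def assms(2)]] show ?thesis
    by (simp add: algebra_simps)
qed

definition second_difference :: "(complex \<Rightarrow> real) \<Rightarrow> complex \<Rightarrow> real \<Rightarrow> real" where
  "second_difference \<phi> p h =
     \<phi> (p + Complex h h) - \<phi> (p + Complex 0 h) - \<phi> (p + Complex h 0) + \<phi> p"

text \<open>By the mean value theorem in \<open>x\<close> the second difference is \<open>h (\<phi>\<^sub>x(p + \<theta> + \<i> h) - \<phi>\<^sub>x(p + \<theta>))\<close>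
  for some \<open>0 < \<theta> < h\<close>, and this difference is estimated by the linearization of \<open>\<phi>\<^sub>x\<close> at \<open>p\<close>.\<close>
lemma second_difference_estimate:
  fixes \<phi> \<phi>x \<phi>y :: "complex \<Rightarrow> real"
  assumes d: "\<And>q. q \<in> cball p (2 * h) \<Longrightarrow> has_partials \<phi> q (\<phi>x q) (\<phi>y q)"
    and h: "0 < h" and e: "0 \<le> e"
    and err: "\<And>y. norm (y - p) < 2 * h \<Longrightarrow>
      \<bar>\<phi>x y - \<phi>x p - (Re (y - p) * a + Im (y - p) * b)\<bar> \<le> e * norm (y - p)"
  shows "\<bar>second_difference \<phi> p h / h\<^sup>2 - b\<bar> \<le> 3 * e"
proof -
  have inU: "p + Complex s t \<in> cball p (2 * h)" if "\<bar>s\<bar> \<le> h" "\<bar>t\<bar> \<le> h" for s t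
    using norm_Complex_le[of s t] that by (auto simp: dist_norm)
  define g where "g s = \<phi> (p + Complex 0 h + of_real s * 1) - \<phi> (p + of_real s * 1)" for s
  have g': "(g has_derivative (\<lambda>t. t * (\<phi>x (p + Complex s h) - \<phi>x (p + Complex s 0)))) (at s within {0..h})"
    if "0 \<le> s" "s \<le> h" for s
  proof -
    have "((\<lambda>s. \<phi> (p + Complex 0 h + of_real s * 1)) has_derivative
        (\<lambda>t. t * (Re 1 * \<phi>x (p + Complex s h) + Im 1 * \<phi>y (p + Complex s h)))) (at s within {0..h})"
      by (rule has_partials_restrict_line[OF d[OF inU]]) (use that h in \<open>auto simp: complex_eq_iff\<close>)
    moreover have "((\<lambda>s. \<phi> (p + of_real s * 1)) has_derivative
        (\<lambda>t. t * (Re 1 * \<phi>x (p + Complex s 0) + Im 1 * \<phi>y (p + Complex s 0)))) (at s within {0..h})"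
      by (rule has_partials_restrict_line[OF d[OF inU]]) (use that h in \<open>auto simp: complex_eq_iff\<close>)
    ultimately show ?thesis unfolding g_def by (auto dest: has_derivative_diff simp: algebra_simps)
  qed
  obtain \<theta> where \<theta>: "\<theta> \<in> {0<..<h}"
    "g h - g 0 = h * (\<phi>x (p + Complex \<theta> h) - \<phi>x (p + Complex \<theta> 0))"
    using mvt_simple[OF h g'] by auto
  have n1: "cmod (Complex \<theta> h) < 2 * h" and n0: "cmod (Complex \<theta> 0) \<le> h"
    using norm_Complex_le[of \<theta> h] norm_Complex_le[of \<theta> 0] \<theta>(1) by auto
  have "\<bar>\<phi>x (p + Complex \<theta> h) - \<phi>x p - (\<theta> * a + h * b)\<bar> \<le> e * cmod (Complex \<theta> h)"
    using err[of "p + Complex \<theta> h"] n1 by simp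
  also have "\<dots> \<le> e * (2 * h)" using mult_left_mono[OF less_imp_le[OF n1] e] by simp
  finally have A: "\<bar>\<phi>x (p + Complex \<theta> h) - \<phi>x p - (\<theta> * a + h * b)\<bar> \<le> e * (2 * h)" .
  have "\<bar>\<phi>x (p + Complex \<theta> 0) - \<phi>x p - \<theta> * a\<bar> \<le> e * cmod (Complex \<theta> 0)"
    using err[of "p + Complex \<theta> 0"] n0 h by simp
  also have "\<dots> \<le> e * h" using mult_left_mono[OF n0 e] .
  finally have B: "\<bar>\<phi>x (p + Complex \<theta> 0) - \<phi>x p - \<theta> * a\<bar> \<le> e * h" .
  have "p + Complex 0 h + of_real h * 1 = p + Complex h h" "p + of_real h * 1 = p + Complex h 0"
    by (simp_all add: complex_eq_iff)
  then have "second_difference \<phi> p h = g h - g 0"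
    unfolding second_difference_def g_def by (simp only:) simp
  then have "second_difference \<phi> p h / h\<^sup>2 - b
      = ((\<phi>x (p + Complex \<theta> h) - \<phi>x (p + Complex \<theta> 0)) - h * b) / h"
    unfolding \<theta>(2) using h by (simp add: power2_eq_square divide_simps)
  moreover have "\<bar>(\<phi>x (p + Complex \<theta> h) - \<phi>x (p + Complex \<theta> 0)) - h * b\<bar> \<le> 3 * e * h"
    using A B by linarith
  ultimately show ?thesis using h by (simp add: abs_divide pos_divide_le_eq)
qed

lemma second_difference_tendsto:
  fixes \<phi> \<phi>x \<phi>y :: "complex \<Rightarrow> real"
  assumes U: "open U" "p \<in> U"
    and d: "\<And>q. q \<in> U \<Longrightarrow> has_partials \<phi> q (\<phi>x q) (\<phi>y q)"
    and dx: "has_partials \<phi>x p a b"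
  shows "((\<lambda>h. second_difference \<phi> p h / h\<^sup>2) \<longlongrightarrow> b) (at_right 0)"
proof (rule tendstoI)
  fix e :: real assume "e > 0"
  define e' where "e' = e / 4"
  have e': "e' > 0" using \<open>e > 0\<close> by (simp add: e'_def)
  obtain d1 where d1: "d1 > 0" "\<And>y. norm (y - p) < d1 \<Longrightarrow>
      \<bar>\<phi>x y - \<phi>x p - (Re (y - p) * a + Im (y - p) * b)\<bar> \<le> e' * norm (y - p)"
    using dx e' unfolding has_partials_def has_derivative_at_alt by fastforce
  obtain r where r: "r > 0" "ball p r \<subseteq> U" using U open_contains_ball by blast
  have "\<bar>second_difference \<phi> p h / h\<^sup>2 - b\<bar> < e" if h: "0 < h" "h < min d1 r / 2" for h
  proof -
    have "cball p (2 * h) \<subseteq> U" using h r(2) cball_subset_ball_iff[of p "2 * h" p r] by auto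
    then have "\<bar>second_difference \<phi> p h / h\<^sup>2 - b\<bar> \<le> 3 * e'"
    proof (intro second_difference_estimate[OF _ h(1) less_imp_le[OF e']])
      show "has_partials \<phi> q (\<phi>x q) (\<phi>y q)" if "cball p (2 * h) \<subseteq> U" "q \<in> cball p (2 * h)" for q
        using that d by blast
      show "\<bar>\<phi>x y - \<phi>x p - (Re (y - p) * a + Im (y - p) * b)\<bar> \<le> e' * norm (y - p)" if "norm (y - p) < 2 * h" for y
        using d1(2) that h by simp
    qed
    then show ?thesis using e' by (simp add: e'_def)
  qed
  then show "\<forall>\<^sub>F h in at_right 0. dist (second_difference \<phi> p h / h\<^sup>2) b < e"
    unfolding eventually_at_right_field dist_real_def using d1(1) r(1)
    by (metis min_less_iff_conj half_gt_zero)
qed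

text \<open>The reflection \<open>z \<mapsto> \<i> z\<^sup>*\<close> exchanges the two coordinates but preserves the second difference,
  so the limit of the latter is also the other mixed partial.\<close>
lemma has_partials_compose_swap:
  assumes "has_partials g (\<i> * cnj p) gx gy"
  shows "has_partials (\<lambda>q. g (\<i> * cnj q)) p gy gx"
proof -
  have "((\<lambda>q. \<i> * cnj q) has_derivative (\<lambda>v. \<i> * cnj v)) (at p)"
    by (auto intro!: derivative_eq_intros)
  from has_derivative_compose[OF this assms[unfolded has_partials_def]] show ?thesis
    unfolding has_partials_def by (simp add: add.commute)
qed

theorem mixed_partials_eq:
  fixes \<phi> \<phi>x \<phi>y :: "complex \<Rightarrow> real"
  assumes U: "open U" "p \<in> U"
    and d: "\<And>q. q \<in> U \<Longrightarrow> has_partials \<phi> q (\<phi>x q) (\<phi>y q)"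
    and dx: "has_partials \<phi>x p a1 b1" and dy: "has_partials \<phi>y p a2 b2"
  shows "b1 = a2"
proof -
  define \<sigma> where "\<sigma> q = \<i> * cnj q" for q
  have \<sigma>\<sigma>: "\<sigma> (\<sigma> q) = q" for q by (simp add: \<sigma>_def)
  have \<sigma>_swap: "\<sigma> (\<sigma> p + Complex x y) = p + Complex y x" for x y
    by (simp add: \<sigma>_def complex_eq_iff)
  have "((\<lambda>h. second_difference \<phi> p h / h\<^sup>2) \<longlongrightarrow> b1) (at_right 0)"
    by (rule second_difference_tendsto[OF U d dx])
  moreover have "((\<lambda>h. second_difference (\<lambda>q. \<phi> (\<sigma> q)) (\<sigma> p) h / h\<^sup>2) \<longlongrightarrow> a2) (at_right 0)"
  proof (rule second_difference_tendsto)
    show "open (\<sigma> -` U)"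
      using U(1) by (rule continuous_open_vimage) (simp add: \<sigma>_def[abs_def] continuous_intros)
    show "\<sigma> p \<in> \<sigma> -` U" using U(2) by (simp add: \<sigma>\<sigma>)
    show "has_partials (\<lambda>q. \<phi> (\<sigma> q)) q (\<phi>y (\<sigma> q)) (\<phi>x (\<sigma> q))" if "q \<in> \<sigma> -` U" for q
      using has_partials_compose_swap[of \<phi> q] d[of "\<sigma> q"] that by (simp add: \<sigma>_def)
    show "has_partials (\<lambda>q. \<phi>y (\<sigma> q)) (\<sigma> p) b2 a2"
      using has_partials_compose_swap[of \<phi>y "\<sigma> p"] dy \<sigma>\<sigma>[of p] by (simp add: \<sigma>_def)
  qed
  moreover have "second_difference (\<lambda>q. \<phi> (\<sigma> q)) (\<sigma> p) h = second_difference \<phi> p h" for h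
    using \<sigma>_swap[of h h] \<sigma>_swap[of 0 h] \<sigma>_swap[of h 0] \<sigma>_swap[of 0 0]
    by (simp add: second_difference_def \<sigma>\<sigma>)
  ultimately show ?thesis using tendsto_unique[OF trivial_limit_at_right_real] by fastforce
qed

section \<open>Minkowski space and the Lie algebra so(4,1)\<close>

lemma exhaust_5: "x = 0 \<or> x = 1 \<or> x = 2 \<or> x = 3 \<or> x = (4::5)"
proof (induct x)
  case (of_int z)
  then have "z = 0 \<or> z = 1 \<or> z = 2 \<or> z = 3 \<or> z = 4" by simp arith
  then show ?case by auto
qed

lemma forall_5: "(\<forall>i::5. P i) \<longleftrightarrow> P 0 \<and> P 1 \<and> P 2 \<and> P 3 \<and> P 4"
  by (metis exhaust_5)

lemma UNIV_5: "UNIV = {0, 1, 2, 3, 4::5}"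
  using exhaust_5 by blast

lemma sum_UNIV_5: "(\<Sum>i\<in>UNIV. g i) = g 0 + g 1 + g 2 + g 3 + g (4::5)"
  unfolding UNIV_5 by (simp add: add.assoc)

lemma idx5_simps [simp]: "idx5 0 = 0" "idx5 1 = 1" "idx5 2 = 2" "idx5 3 = 3" "idx5 4 = 4"
  by (simp_all add: idx5_def)

lemma sgnL_simps [simp]: "sgnL 0 = 1" "sgnL 1 = 1" "sgnL 2 = 1" "sgnL 3 = 1" "sgnL 4 = -1"
  by (simp_all add: sgnL_def)

definition lor_real :: "real^5 \<Rightarrow> real^5 \<Rightarrow> real" where
  "lor_real x y = (\<Sum>i\<in>UNIV. sgnL i * x $ i * y $ i)"

lemma lor_real_commute: "lor_real x y = lor_real y x"
  unfolding lor_real_def by (simp add: mult.commute mult.left_commute)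

interpretation lor_real: bounded_bilinear lor_real
  unfolding bilinear_conv_bounded_bilinear[symmetric] bilinear_def
  by (auto intro!: linearI simp: lor_real_def algebra_simps sum.distrib sum_distrib_left)

lemmas lor_real_linear_simps = lor_real.add_left lor_real.add_right lor_real.diff_left lor_real.diff_right
  lor_real.minus_left lor_real.minus_right lor_real.scaleR_left lor_real.scaleR_right
  lor_real.zero_left lor_real.zero_right

lemma lor_Complex_cvf: "lor (\<chi> i. Complex (x $ i) (y $ i)) (cvf g q) = Complex (lor_real x (g q)) (lor_real y (g q))"
  unfolding lor_def lor_real_def cvf_def
  by (simp add: complex_eq_iff Re_sum Im_sum mult.commute mult.left_commute)

lemma transpose_mult_etaR_nth: "(transpose X ** etaR) $ i $ j = X $ j $ i * sgnL j"
proof -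
  have "(transpose X ** etaR) $ i $ j = (\<Sum>k\<in>UNIV. X $ k $ i * (if k = j then sgnL k else 0))"
    by (simp add: matrix_matrix_mult_def etaR_def transpose_def)
  also have "\<dots> = (\<Sum>k\<in>UNIV. if k = j then X $ j $ i * sgnL j else 0)"
    by (rule sum.cong) auto
  finally show ?thesis by simp
qed

lemma etaR_mult_nth: "(etaR ** X) $ i $ j = sgnL i * X $ i $ j"
proof -
  have "(etaR ** X) $ i $ j = (\<Sum>k\<in>UNIV. (if i = k then sgnL i else 0) * X $ k $ j)"
    by (simp add: matrix_matrix_mult_def etaR_def)
  also have "\<dots> = (\<Sum>k\<in>UNIV. if k = i then sgnL i * X $ i $ j else 0)"
    by (rule sum.cong) auto
  finally show ?thesis by simp
qed

lemma etaR_mult_etaR: "etaR ** etaR = mat 1"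
  unfolding vec_eq_iff by (simp only: etaR_mult_nth) (simp add: etaR_def mat_def sgnL_def)

lemma matrix_matrix_mult_nth: "(A ** B) $ i $ j = (\<Sum>k\<in>UNIV. A $ i $ k * B $ k $ j)"
  by (simp add: matrix_matrix_mult_def)

lemma gram_etaR_nth: "(transpose M ** etaR ** M) $ i $ j = lor_real (column i M) (column j M)"
  unfolding lor_real_def column_def
  by (simp only: matrix_matrix_mult_nth[of "transpose M ** etaR"] transpose_mult_etaR_nth)
    (simp add: mult.commute mult.left_commute)

lemma etaR_gram_etaR_nth:
  "(etaR ** transpose M ** etaR ** N) $ i $ j = sgnL i * lor_real (column i M) (column j N)"
proof -
  have "etaR ** transpose M ** etaR ** N = etaR ** (transpose M ** etaR ** N)"
    by (simp add: matrix_mul_assoc)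
  then show ?thesis unfolding lor_real_def column_def
    by (simp only: etaR_mult_nth matrix_matrix_mult_nth[of "transpose M ** etaR"] transpose_mult_etaR_nth)
      (simp add: mult.commute mult.left_commute)
qed

lemma matrix_inv_eq_left_inverse:
  fixes A B :: "real^'n^'n"
  assumes "B ** A = mat 1"
  shows "matrix_inv A = B"
proof -
  have AB: "A ** B = mat 1" using assms matrix_left_right_inverse by blast
  have inv: "A ** matrix_inv A = mat 1 \<and> matrix_inv A ** A = mat 1"
    unfolding matrix_inv_def by (rule someI[of _ B]) (use AB assms in blast)
  have "matrix_inv A = matrix_inv A ** (A ** B)" using AB by simp
  also have "\<dots> = B" using inv by (simp add: matrix_mul_assoc)
  finally show ?thesis .
qed

lemma alpha_add: "alpha (A + B) v = alpha A v + alpha B v"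
  by (simp add: alpha_def vec_eq_iff algebra_simps)

lemma alpha_scaleR: "alpha (r *\<^sub>R A) v = r *\<^sub>R alpha A v"
  by (simp add: alpha_def vec_eq_iff algebra_simps)

lemma alpha_eq_Re_Im: "alpha A v = Re v *\<^sub>R alpha A 1 + Im v *\<^sub>R alpha A \<i>"
  unfolding alpha_def vec_eq_iff by (simp add: algebra_simps)

lemma so41_alpha:
  assumes "\<And>i j. of_real (sgnL j) * A $ j $ i + of_real (sgnL i) * A $ i $ j = 0"
  shows "so41 (alpha A v)"
  unfolding so41_def vec_eq_iff
proof (intro allI)
  fix i j
  have "sgnL j * Re (A $ j $ i) + sgnL i * Re (A $ i $ j) = 0"
    and "sgnL j * Im (A $ j $ i) + sgnL i * Im (A $ i $ j) = 0"
    using assms[of j i] by (simp_all add: complex_eq_iff)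
  moreover have "(transpose (alpha A v) ** etaR + etaR ** alpha A v) $ i $ j
     = 2 * Re v * (sgnL j * Re (A $ j $ i) + sgnL i * Re (A $ i $ j))
       - 2 * Im v * (sgnL j * Im (A $ j $ i) + sgnL i * Im (A $ i $ j))"
    by (simp add: transpose_mult_etaR_nth etaR_mult_nth alpha_def algebra_simps)
  ultimately show "(transpose (alpha A v) ** etaR + etaR ** alpha A v) $ i $ j = 0 $ i $ j"
    by simp
qed

section \<open>The matrices \<open>A\<^sup>t\<close>\<close>

text \<open>The pattern of \<open>Amat\<close> with its entries as parameters: \<open>E\<close> stands for \<open>e\<^sup>u\<close> and \<open>Z\<close> for \<open>u\<^sub>z\<close>.\<close>
definition Amat_param :: "real \<Rightarrow> complex \<Rightarrow> complex \<Rightarrow> complex \<Rightarrow> complex \<Rightarrow> complex \<Rightarrow> complex^5^5" where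
  "Amat_param E Z a1 b1 a2 b2 = (let e = complex_of_real E; s = complex_of_real (sqrt 2);
     ent = (\<lambda>r k::nat. [[0, - e / s, \<i> * e / s, 0, 0],
            [e / s, 0, \<i> * Z, - a1, a2],
            [- \<i> * e / s, - \<i> * Z, 0, - \<i> * b1, \<i> * b2],
            [0, a1, \<i> * b1, 0, 0],
            [0, a2, \<i> * b2, 0, 0]] ! r ! k) in (\<chi> i j. ent (idx5 i) (idx5 j)))"

lemma Amat_param_nth [simp]:
  "Amat_param E Z a1 b1 a2 b2 $ 0 $ 0 = 0"
  "Amat_param E Z a1 b1 a2 b2 $ 0 $ 1 = - of_real E / of_real (sqrt 2)"
  "Amat_param E Z a1 b1 a2 b2 $ 0 $ 2 = \<i> * of_real E / of_real (sqrt 2)"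
  "Amat_param E Z a1 b1 a2 b2 $ 0 $ 3 = 0"
  "Amat_param E Z a1 b1 a2 b2 $ 0 $ 4 = 0"
  "Amat_param E Z a1 b1 a2 b2 $ 1 $ 0 = of_real E / of_real (sqrt 2)"
  "Amat_param E Z a1 b1 a2 b2 $ 1 $ 1 = 0"
  "Amat_param E Z a1 b1 a2 b2 $ 1 $ 2 = \<i> * Z"
  "Amat_param E Z a1 b1 a2 b2 $ 1 $ 3 = - a1"
  "Amat_param E Z a1 b1 a2 b2 $ 1 $ 4 = a2"
  "Amat_param E Z a1 b1 a2 b2 $ 2 $ 0 = - \<i> * of_real E / of_real (sqrt 2)"
  "Amat_param E Z a1 b1 a2 b2 $ 2 $ 1 = - \<i> * Z"
  "Amat_param E Z a1 b1 a2 b2 $ 2 $ 2 = 0"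
  "Amat_param E Z a1 b1 a2 b2 $ 2 $ 3 = - \<i> * b1"
  "Amat_param E Z a1 b1 a2 b2 $ 2 $ 4 = \<i> * b2"
  "Amat_param E Z a1 b1 a2 b2 $ 3 $ 0 = 0"
  "Amat_param E Z a1 b1 a2 b2 $ 3 $ 1 = a1"
  "Amat_param E Z a1 b1 a2 b2 $ 3 $ 2 = \<i> * b1"
  "Amat_param E Z a1 b1 a2 b2 $ 3 $ 3 = 0"
  "Amat_param E Z a1 b1 a2 b2 $ 3 $ 4 = 0"
  "Amat_param E Z a1 b1 a2 b2 $ 4 $ 0 = 0"
  "Amat_param E Z a1 b1 a2 b2 $ 4 $ 1 = a2"
  "Amat_param E Z a1 b1 a2 b2 $ 4 $ 2 = \<i> * b2"
  "Amat_param E Z a1 b1 a2 b2 $ 4 $ 3 = 0"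
  "Amat_param E Z a1 b1 a2 b2 $ 4 $ 4 = 0"
  by (simp_all add: Amat_param_def Let_def)

lemma Amat_param_skew:
  "of_real (sgnL j) * Amat_param E Z a1 b1 a2 b2 $ j $ i + of_real (sgnL i) * Amat_param E Z a1 b1 a2 b2 $ i $ j = 0"
  using exhaust_5[of i] exhaust_5[of j] by auto

lemma Amat_eq_param:
  fixes c t :: real and h u :: "complex \<Rightarrow> real" and \<xi> :: "complex \<Rightarrow> complex" and p :: complex
  defines "a1 \<equiv> (of_real (exp (- u p)) * (\<xi> p + of_real c) + of_real (exp (u p) * (h p + t / (2 * c))))
      / of_real (sqrt 2)"
    and "a2 \<equiv> (of_real (exp (- u p)) * \<xi> p + of_real (exp (u p) * (h p + t / (2 * c)))) / of_real (sqrt 2)"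
    and "H \<equiv> 2 * of_real (exp (u p) * (h p + t / (2 * c))) / of_real (sqrt 2)"
  shows "Amat c \<xi> h u t p = Amat_param (exp (u p)) (Dz (\<lambda>q. of_real (u q)) p) a1 (a1 - H) a2 (a2 - H)"
  unfolding vec_eq_iff forall_5
  by (simp add: Amat_def Let_def a1_def a2_def H_def add_divide_distrib diff_divide_distrib algebra_simps)

definition Mdeform :: "complex^5^5" where
  "Mdeform = Amat_param 0 0 1 (- 1) 1 (- 1)"

lemma Amat_deform: "Amat c \<xi> h u t p = Amat c \<xi> h u 0 p + (exp (u p) * (t / (2 * c) / sqrt 2)) *\<^sub>R Mdeform"
  unfolding vec_eq_iff forall_5 Mdeform_def vector_add_component vector_scaleR_component
  by (simp add: Amat_def Let_def scaleR_conv_of_real add_divide_distrib diff_divide_distrib algebra_simps)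

lemma Mdeform_commute: "alpha Mdeform 1 ** alpha Mdeform \<i> = alpha Mdeform \<i> ** alpha Mdeform 1"
  unfolding vec_eq_iff forall_5 Mdeform_def by (simp add: matrix_matrix_mult_def sum_UNIV_5 alpha_def)

text \<open>The part of the curvature of \<open>\<alpha>\<^sub>t\<close> that is linear in \<open>t\<close>, divided by \<open>e\<^sup>u t / (2 sqrt 2 c)\<close>;
  it vanishes because \<open>b\<^sub>1 - a\<^sub>1 = b\<^sub>2 - a\<^sub>2\<close>.\<close>
lemma Amat_param_Mdeform_bracket:
  fixes ux uy E :: real and a1 a2 H :: complex
  defines "A \<equiv> Amat_param E (Complex (ux / 2) (- uy / 2)) a1 (a1 - H) a2 (a2 - H)"
    and "Mx \<equiv> alpha Mdeform 1" and "My \<equiv> alpha Mdeform \<i>"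
  shows "ux *\<^sub>R My - uy *\<^sub>R Mx + (alpha A 1 ** My - My ** alpha A 1) + (Mx ** alpha A \<i> - alpha A \<i> ** Mx) = 0"
  unfolding vec_eq_iff forall_5 A_def Mx_def My_def Mdeform_def
  by (simp add: matrix_matrix_mult_def sum_UNIV_5 alpha_def algebra_simps)

text \<open>Here \<open>TX i j\<close> and \<open>TY i j\<close> stand for \<open>\<langle>F\<^sub>i, \<partial>\<^sub>x F\<^sub>j\<rangle>\<close> and \<open>\<langle>F\<^sub>i, \<partial>\<^sub>y F\<^sub>j\<rangle>\<close> for the frame
  \<open>(F\<^sub>0, \<dots>, F\<^sub>4) = (f, F\<^sub>1, F\<^sub>2, N\<^sub>1, N\<^sub>2)\<close>, and the hypotheses are its structure equations.\<close>
lemma structure_matrices_eq_alpha: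
  fixes E K ux uy hh c :: real and x :: complex and TX TY :: "5 \<Rightarrow> 5 \<Rightarrow> real"
  assumes E: "E > 0" and K: "K = E / sqrt 2"
    and col0: "\<And>i. TX i 0 = (if i = 1 then 2 * K else 0)" "\<And>i. TY i 0 = (if i = 2 then 2 * K else 0)"
    and skew: "\<And>i j. TX i j + TX j i = 0" "\<And>i j. TY i j + TY j i = 0"
    and rel: "K * ux + K * TY 1 2 = 0"
      "K * TX 2 1 + K * uy = 0"
      "K * TX 3 1 + K * TY 3 2 = 2 * (E * E * hh)"
      "K * TY 3 1 - K * TX 3 2 = 0"
      "K * TX 4 1 + K * TY 4 2 = - 2 * (E * E * hh)"
      "K * TY 4 1 - K * TX 4 2 = 0"
      "K * TX 3 1 - K * TY 3 2 = 2 * (Re x + c)"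
      "- K * TX 3 2 - K * TY 3 1 = 2 * Im x"
      "K * TX 4 1 - K * TY 4 2 = - 2 * Re x"
      "- K * TX 4 2 - K * TY 4 1 = - 2 * Im x"
    and par: "TX 4 3 = 0" "TY 4 3 = 0"
  defines "a1 \<equiv> (of_real (inverse E) * (x + of_real c) + of_real (E * hh)) / of_real (sqrt 2)"
    and "a2 \<equiv> (of_real (inverse E) * x + of_real (E * hh)) / of_real (sqrt 2)"
    and "H \<equiv> 2 * of_real (E * hh) / of_real (sqrt 2)"
  defines "A \<equiv> Amat_param E (Complex (ux / 2) (- uy / 2)) a1 (a1 - H) a2 (a2 - H)"
  shows "(\<chi> i j. sgnL i * TX i j) = alpha A 1" "(\<chi> i j. sgnL i * TY i j) = alpha A \<i>"
proof -
  have Kpos: "K > 0" using E K by simp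
  have anti: "TX i j = - TX j i" "TY i j = - TY j i" for i j
    using skew[of i j] by simp_all
  have diag: "TX i i = 0" "TY i i = 0" for i
    using skew(1)[of i i] skew(2)[of i i] by simp_all
  have "TX 2 1 = - uy" "TY 1 2 = - ux"
    using rel(1,2) Kpos by (simp_all add: ring_distribs[symmetric] add_eq_0_iff)
  moreover have "K * TX 3 1 = E * E * hh + Re x + c" "K * TY 3 2 = E * E * hh - Re x - c"
    "K * TX 3 2 = - Im x" "K * TY 3 1 = - Im x"
    "K * TX 4 1 = - E * E * hh - Re x" "K * TY 4 2 = Re x - E * E * hh"
    "K * TX 4 2 = Im x" "K * TY 4 1 = Im x"
    using rel by algebra+
  ultimately have vals: "TX 2 1 = - uy" "TY 1 2 = - ux"
    "TX 3 1 = (E * E * hh + Re x + c) / K" "TY 3 2 = (E * E * hh - Re x - c) / K"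
    "TX 3 2 = - Im x / K" "TY 3 1 = - Im x / K"
    "TX 4 1 = (- E * E * hh - Re x) / K" "TY 4 2 = (Re x - E * E * hh) / K"
    "TX 4 2 = Im x / K" "TY 4 1 = Im x / K"
    using Kpos by (simp_all add: field_simps)
  note entries = vals par diag col0
  show "(\<chi> i j. sgnL i * TX i j) = alpha A 1"
    unfolding vec_eq_iff forall_5 alpha_def A_def a1_def a2_def H_def
    apply (simp add: entries anti(1)[of 0] anti(1)[of 1 3] anti(1)[of 1 4] anti(1)[of 2 3] anti(1)[of 2 4]
        anti(1)[of 3 4] anti(1)[of 1 2])
    using E by (simp add: K field_simps power2_eq_square)
  show "(\<chi> i j. sgnL i * TY i j) = alpha A \<i>"
    unfolding vec_eq_iff forall_5 alpha_def A_def a1_def a2_def H_def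
    apply (simp add: entries anti(2)[of 0] anti(2)[of 1 3] anti(2)[of 1 4] anti(2)[of 2 3] anti(2)[of 2 4]
        anti(2)[of 3 4] anti(2)[of 2 1])
    using E by (simp add: K field_simps power2_eq_square)
qed

lemma so41_alpha_Amat: "so41 (alpha (Amat c \<xi> h u t p) v)"
  unfolding Amat_eq_param by (rule so41_alpha[OF Amat_param_skew])

section \<open>Zero curvature\<close>

lemma matrix_add_rdistrib: "(A + B) ** C = A ** C + B ** (C :: 'a::semiring_1^'p^'n)"
  by (simp add: matrix_matrix_mult_def vec_eq_iff sum.distrib algebra_simps)

lemma matrix_diff_ldistrib: "C ** (A - B) = C ** A - C ** (B :: 'a::ring_1^'p^'n)"
  by (simp add: matrix_matrix_mult_def vec_eq_iff sum_subtractf algebra_simps)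

lemma matrix_diff_rdistrib: "(A - B) ** C = A ** C - B ** (C :: 'a::ring_1^'p^'n)"
  by (simp add: matrix_matrix_mult_def vec_eq_iff sum_subtractf algebra_simps)

lemma matrix_neg_mult: "(- A) ** C = - (A ** (C :: 'a::ring_1^'p^'n))"
  by (simp add: matrix_matrix_mult_def vec_eq_iff sum_negf)

lemma bounded_bilinear_matrix_matrix_mult:
  "bounded_bilinear ((**) :: real^'n^'m \<Rightarrow> real^'p^'n \<Rightarrow> real^'p^'m)"
  unfolding bilinear_conv_bounded_bilinear[symmetric] bilinear_def
  by (auto intro!: linearI simp: matrix_add_ldistrib matrix_add_rdistrib matrix_scalar_ac
      scalar_matrix_assoc[symmetric])

lemma bounded_linear_transpose: "bounded_linear (transpose :: real^'n^'m \<Rightarrow> real^'m^'n)"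
  unfolding linear_conv_bounded_linear[symmetric]
  by (auto intro!: linearI simp: transpose_def vec_eq_iff)

lemma has_partials_matrix_mult:
  fixes A :: "complex \<Rightarrow> real^'n^'m" and B :: "complex \<Rightarrow> real^'p^'n"
  shows "has_partials A p Ax Ay \<Longrightarrow> has_partials B p Bx By \<Longrightarrow>
    has_partials (\<lambda>q. A q ** B q) p (A p ** Bx + Ax ** B p) (A p ** By + Ay ** B p)"
  by (rule has_partials_bounded_bilinear[OF bounded_bilinear_matrix_matrix_mult])

lemma has_partials_transpose:
  fixes A :: "complex \<Rightarrow> real^'n^'m"
  shows "has_partials A p Ax Ay \<Longrightarrow> has_partials (\<lambda>q. transpose (A q)) p (transpose Ax) (transpose Ay)"
  by (rule has_partials_bounded_linear[OF bounded_linear_transpose])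

lemma frechet_derivative_cong_open:
  assumes "open U" "p \<in> U" "\<And>q. q \<in> U \<Longrightarrow> g q = k q"
  shows "frechet_derivative g (at p) = frechet_derivative k (at p)"
proof -
  have "(g has_derivative D) (at p) \<longleftrightarrow> (k has_derivative D) (at p)" for D
    using assms has_derivative_transform_within_open[of g D p UNIV U k]
      has_derivative_transform_within_open[of k D p UNIV U g] by auto
  then show ?thesis unfolding frechet_derivative_def by simp
qed

text \<open>The Maurer--Cartan equation \<open>d\<alpha> + (1/2)[\<alpha>\<and>\<alpha>] = 0\<close> at \<open>p\<close> for \<open>\<alpha> = Ax dx + Ay dy\<close>.\<close>
definition zero_curvature_at :: "(complex \<Rightarrow> real^'n^'n) \<Rightarrow> (complex \<Rightarrow> real^'n^'n) \<Rightarrow> complex \<Rightarrow> bool" where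
  "zero_curvature_at Ax Ay p \<longleftrightarrow> pdx Ay p - pdy Ax p + (Ax p ** Ay p - Ay p ** Ax p) = 0"

lemma zero_curvature_at_cong:
  assumes "open U" "p \<in> U" "\<And>q. q \<in> U \<Longrightarrow> Ax q = Bx q" "\<And>q. q \<in> U \<Longrightarrow> Ay q = By q"
  shows "zero_curvature_at Ax Ay p \<longleftrightarrow> zero_curvature_at Bx By p"
  using frechet_derivative_cong_open[OF assms(1,2,3)] frechet_derivative_cong_open[OF assms(1,2,4)] assms
  unfolding zero_curvature_at_def pdx_def pdy_def by simp

lemma zero_curvature_at_iff:
  "has_partials Ax p Axx Axy \<Longrightarrow> has_partials Ay p Ayx Ayy \<Longrightarrow>
    zero_curvature_at Ax Ay p \<longleftrightarrow> Ayx - Axy + (Ax p ** Ay p - Ay p ** Ax p) = 0"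
  unfolding zero_curvature_at_def using has_partials_imp_pdx_pdy by metis

text \<open>The Maurer--Cartan equation of a logarithmic derivative: differentiating \<open>F\<^sup>-\<^sup>1 F = 1\<close>
  gives \<open>d(F\<^sup>-\<^sup>1) = - F\<^sup>-\<^sup>1 dF F\<^sup>-\<^sup>1\<close>, and the second derivatives of \<open>F\<close> cancel by symmetry.\<close>
lemma zero_curvature_at_logarithmic_derivative:
  fixes F Finv :: "complex \<Rightarrow> real^'n^'n"
  assumes U: "open U" "p \<in> U"
    and inv: "\<And>q. q \<in> U \<Longrightarrow> Finv q ** F q = mat 1"
    and dF: "\<And>q. q \<in> U \<Longrightarrow> has_partials F q (Fx q) (Fy q)"
    and dFinv: "has_partials Finv p Ix Iy"
    and dFx: "has_partials Fx p Fxx Fxy" and dFy: "has_partials Fy p Fxy Fyy"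
  shows "zero_curvature_at (\<lambda>q. Finv q ** Fx q) (\<lambda>q. Finv q ** Fy q) p"
proof -
  have "has_partials (\<lambda>q. Finv q ** F q) p (Finv p ** Fx p + Ix ** F p) (Finv p ** Fy p + Iy ** F p)"
    by (rule has_partials_matrix_mult[OF dFinv dF[OF U(2)]])
  moreover have "has_partials (\<lambda>q. Finv q ** F q) p 0 0"
    by (rule has_partials_transform_open[OF has_partials_const U]) (simp add: inv)
  ultimately have "Finv p ** Fx p + Ix ** F p = 0" "Finv p ** Fy p + Iy ** F p = 0"
    using has_partials_unique by blast+
  then have Ix: "Ix ** F p = - (Finv p ** Fx p)" and Iy: "Iy ** F p = - (Finv p ** Fy p)"
    by (simp_all add: eq_neg_iff_add_eq_0 add.commute)
  have right_inv: "F p ** Finv p = mat 1" using inv[OF U(2)] matrix_left_right_inverse by blast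
  have reassoc: "I ** G = (I ** F p) ** (Finv p ** G)" for I G :: "real^'n^'n"
  proof -
    have "I ** G = I ** ((F p ** Finv p) ** G)" using right_inv by simp
    then show ?thesis by (simp add: matrix_mul_assoc)
  qed
  have "Ix ** Fy p = - ((Finv p ** Fx p) ** (Finv p ** Fy p))"
    unfolding reassoc[of Ix "Fy p"] Ix by (rule matrix_neg_mult)
  moreover have "Iy ** Fx p = - ((Finv p ** Fy p) ** (Finv p ** Fx p))"
    unfolding reassoc[of Iy "Fx p"] Iy by (rule matrix_neg_mult)
  ultimately show ?thesis
    using zero_curvature_at_iff[OF has_partials_matrix_mult[OF dFinv dFx] has_partials_matrix_mult[OF dFinv dFy]]
    by simp
qed

lemma zero_curvature_at_deform:
  fixes Ax Ay :: "complex \<Rightarrow> real^'n^'n"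
  assumes flat: "zero_curvature_at Ax Ay p"
    and "Ax differentiable (at p)" "Ay differentiable (at p)" and dk: "has_partials k p kx ky"
    and linear_term: "kx *\<^sub>R My - ky *\<^sub>R Mx + k p *\<^sub>R ((Ax p ** My - My ** Ax p) + (Mx ** Ay p - Ay p ** Mx)) = 0"
    and commute: "Mx ** My = My ** Mx"
  shows "zero_curvature_at (\<lambda>q. Ax q + k q *\<^sub>R Mx) (\<lambda>q. Ay q + k q *\<^sub>R My) p"
proof -
  obtain Axx Axy Ayx Ayy where dAx: "has_partials Ax p Axx Axy" and dAy: "has_partials Ay p Ayx Ayy"
    using assms(2,3) differentiable_imp_has_partials by blast
  have dBx: "has_partials (\<lambda>q. Ax q + k q *\<^sub>R Mx) p (Axx + kx *\<^sub>R Mx) (Axy + ky *\<^sub>R Mx)"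
    using has_partials_add[OF dAx has_partials_scaleR[OF dk has_partials_const]] by simp
  have dBy: "has_partials (\<lambda>q. Ay q + k q *\<^sub>R My) p (Ayx + kx *\<^sub>R My) (Ayy + ky *\<^sub>R My)"
    using has_partials_add[OF dAy has_partials_scaleR[OF dk has_partials_const]] by simp
  have expand: "(Ayx + kx *\<^sub>R My) - (Axy + ky *\<^sub>R Mx)
      + ((Ax p + k p *\<^sub>R Mx) ** (Ay p + k p *\<^sub>R My) - (Ay p + k p *\<^sub>R My) ** (Ax p + k p *\<^sub>R Mx))
    = (Ayx - Axy + (Ax p ** Ay p - Ay p ** Ax p))
      + (kx *\<^sub>R My - ky *\<^sub>R Mx + k p *\<^sub>R ((Ax p ** My - My ** Ax p) + (Mx ** Ay p - Ay p ** Mx)))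
      + (k p * k p) *\<^sub>R (Mx ** My - My ** Mx)"
    by (simp add: matrix_add_ldistrib matrix_add_rdistrib matrix_scalar_ac scalar_matrix_assoc[symmetric]
        matrix_diff_ldistrib matrix_diff_rdistrib algebra_simps)
  have "Ayx - Axy + (Ax p ** Ay p - Ay p ** Ax p) = 0"
    using flat unfolding zero_curvature_at_iff[OF dAx dAy] .
  then show ?thesis
    unfolding zero_curvature_at_iff[OF dBx dBy] expand linear_term commute by simp
qed

section \<open>The adapted frame of a marginally trapped immersion\<close>

lemma exp_double: "exp (2 * x) = exp x * exp (x::real)"
  by (simp add: exp_add[symmetric])

definition frame_col :: "(complex \<Rightarrow> real^5) \<Rightarrow> (complex \<Rightarrow> real^5) \<Rightarrow> (complex \<Rightarrow> real^5) \<Rightarrow>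
    (complex \<Rightarrow> real^5) \<Rightarrow> (complex \<Rightarrow> real^5) \<Rightarrow> 5 \<Rightarrow> complex \<Rightarrow> real^5" where
  "frame_col f F1 F2 N1 N2 j =
    (if j = 0 then f else if j = 1 then F1 else if j = 2 then F2 else if j = 3 then N1 else N2)"

lemma frame_col_simps:
  "frame_col f F1 F2 N1 N2 0 = f" "frame_col f F1 F2 N1 N2 1 = F1" "frame_col f F1 F2 N1 N2 2 = F2"
  "frame_col f F1 F2 N1 N2 3 = N1" "frame_col f F1 F2 N1 N2 4 = N2"
  by (simp_all add: frame_col_def)

lemma column_frameF: "column j (frameF f F1 F2 N1 N2 q) = frame_col f F1 F2 N1 N2 j q"
  unfolding column_def frameF_def frame_col_def by (simp add: vec_eq_iff)

lemma frameF_nth: "frameF f F1 F2 N1 N2 q $ i $ j = frame_col f F1 F2 N1 N2 j q $ i"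
  unfolding frameF_def frame_col_def by simp

locale marginally_trapped_frame =
  fixes U :: "complex set"
    and f F1 F2 N1 N2 :: "complex \<Rightarrow> real^5"
    and u h :: "complex \<Rightarrow> real"
    and \<xi> :: "complex \<Rightarrow> complex"
    and c :: real
  assumes open_U: "open U"
    and C2: "Ck_on 2 U f" "Ck_on 2 U F1" "Ck_on 2 U F2" "Ck_on 2 U N1" "Ck_on 2 U N2" "Ck_on 2 U u"
    and frame: "\<And>p. p \<in> U \<Longrightarrow> SOp41 (frameF f F1 F2 N1 N2 p)"
    and fz: "\<And>p. p \<in> U \<Longrightarrow> DzV (cvf f) p
        = complex_of_real (exp (u p) / sqrt 2) *s (cvf F1 p - \<i> *s cvf F2 p)"
    and xi2: "\<And>p. p \<in> U \<Longrightarrow> \<xi> p = - lor (DzV (DzV (cvf f)) p) (cvf N2 p)"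
    and xi1: "\<And>p. p \<in> U \<Longrightarrow> lor (DzV (DzV (cvf f)) p) (cvf N1 p) = \<xi> p + complex_of_real c"
    and mtrapped: "\<And>p. p \<in> U \<Longrightarrow> DzbV (DzV (cvf f)) p
        = - complex_of_real (exp (2 * u p)) *s cvf f p
          + complex_of_real (exp (2 * u p) * h p) *s (cvf N1 p + cvf N2 p)"
    and parallel: "\<And>p. p \<in> U \<Longrightarrow> lor (DzV (cvf N1) p) (cvf N2 p) = 0"
begin

abbreviation "G \<equiv> frame_col f F1 F2 N1 N2"
abbreviation "Fr \<equiv> frameF f F1 F2 N1 N2"

lemma has_partials_G:
  assumes "q \<in> U"
  shows "has_partials (G j) q (pdx (G j) q) (pdy (G j) q)"
    "has_partials (pdx (G j)) q (pdx (pdx (G j)) q) (pdy (pdx (G j)) q)"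
    "has_partials (pdy (G j)) q (pdx (pdy (G j)) q) (pdy (pdy (G j)) q)"
proof -
  have "Ck_on 2 U (G j)" using C2 exhaust_5[of j] by (auto simp: frame_col_def)
  from Ck_on_2_imp_has_partials[OF this open_U assms] show
    "has_partials (G j) q (pdx (G j) q) (pdy (G j) q)"
    "has_partials (pdx (G j)) q (pdx (pdx (G j)) q) (pdy (pdx (G j)) q)"
    "has_partials (pdy (G j)) q (pdx (pdy (G j)) q) (pdy (pdy (G j)) q)" .
qed

lemma has_partials_u: "q \<in> U \<Longrightarrow> has_partials u q (pdx u q) (pdy u q)"
  using Ck_on_2_imp_has_partials(1)[OF C2(6) open_U] .

lemma lor_real_G: assumes "q \<in> U" shows "lor_real (G i q) (G j q) = (if i = j then sgnL i else 0)"
proof -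
  have "(transpose (Fr q) ** etaR ** Fr q) $ i $ j = etaR $ i $ j"
    using frame[OF assms] unfolding SOp41_def by simp
  then have "lor_real (G i q) (G j q) = etaR $ i $ j" by (simp only: gram_etaR_nth column_frameF)
  then show ?thesis by (simp add: etaR_def)
qed

lemma lor_real_G_pd_skew:
  assumes "q \<in> U"
  shows "lor_real (G i q) (pdx (G j) q) + lor_real (G j q) (pdx (G i) q) = 0"
    "lor_real (G i q) (pdy (G j) q) + lor_real (G j q) (pdy (G i) q) = 0"
proof -
  have "has_partials (\<lambda>q. lor_real (G i q) (G j q)) q
      (lor_real (G i q) (pdx (G j) q) + lor_real (pdx (G i) q) (G j q))
      (lor_real (G i q) (pdy (G j) q) + lor_real (pdy (G i) q) (G j q))"
    by (intro has_partials_bounded_bilinear[OF lor_real.bounded_bilinear_axioms] has_partials_G assms)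
  moreover have "has_partials (\<lambda>q. lor_real (G i q) (G j q)) q 0 0"
    by (rule has_partials_transform_open[OF has_partials_const open_U assms]) (simp add: lor_real_G)
  ultimately show "lor_real (G i q) (pdx (G j) q) + lor_real (G j q) (pdx (G i) q) = 0"
    "lor_real (G i q) (pdy (G j) q) + lor_real (G j q) (pdy (G i) q) = 0"
    using has_partials_unique by (fastforce simp: lor_real_commute)+
qed

lemma lor_real_G_pd_self:
  assumes "q \<in> U" shows "lor_real (G i q) (pdx (G i) q) = 0" "lor_real (G i q) (pdy (G i) q) = 0"
  using lor_real_G_pd_skew[OF assms, of i i] by simp_all

lemma pd_G0:
  assumes "q \<in> U"
  shows "pdx (G 0) q = (2 * (exp (u q) / sqrt 2)) *\<^sub>R G 1 q"
    "pdy (G 0) q = (2 * (exp (u q) / sqrt 2)) *\<^sub>R G 2 q"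
proof -
  have "Complex (pdx f q $ i / 2) (- pdy f q $ i / 2)
      = of_real (exp (u q) / sqrt 2) * (of_real (F1 q $ i) - \<i> * of_real (F2 q $ i))" for i
    using arg_cong[OF fz[OF assms], of "\<lambda>v. v $ i"] DzV_cvf[OF has_partials_G(1)[OF assms, of 0]]
    by (simp add: frame_col_simps cvf_def right_diff_distrib diff_divide_distrib mult.assoc)
  then show "pdx (G 0) q = (2 * (exp (u q) / sqrt 2)) *\<^sub>R G 1 q"
    "pdy (G 0) q = (2 * (exp (u q) / sqrt 2)) *\<^sub>R G 2 q"
    by (simp_all add: frame_col_simps vec_eq_iff complex_eq_iff field_simps)
qed

lemma Wirtinger_second_derivatives_f:
  assumes q: "q \<in> U"
  defines "K \<equiv> exp (u q) / sqrt 2" and "ux \<equiv> pdx u q" and "uy \<equiv> pdy u q"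
  shows "DzV (DzV (cvf f)) q = (\<chi> i. Complex
      (((1/2) *\<^sub>R ((K*ux) *\<^sub>R G 1 q + K *\<^sub>R pdx (G 1) q - (K*uy) *\<^sub>R G 2 q - K *\<^sub>R pdy (G 2) q)) $ i)
      (((1/2) *\<^sub>R (- (K*ux) *\<^sub>R G 2 q - K *\<^sub>R pdx (G 2) q - (K*uy) *\<^sub>R G 1 q - K *\<^sub>R pdy (G 1) q)) $ i))"
    "DzbV (DzV (cvf f)) q = (\<chi> i. Complex
      (((1/2) *\<^sub>R ((K*ux) *\<^sub>R G 1 q + K *\<^sub>R pdx (G 1) q + (K*uy) *\<^sub>R G 2 q + K *\<^sub>R pdy (G 2) q)) $ i)
      (((1/2) *\<^sub>R (- (K*ux) *\<^sub>R G 2 q - K *\<^sub>R pdx (G 2) q + (K*uy) *\<^sub>R G 1 q + K *\<^sub>R pdy (G 1) q)) $ i))"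
proof -
  have fz_U: "DzV (cvf f) p $ i = Complex (exp (u p) / sqrt 2 * G 1 p $ i) (- (exp (u p) / sqrt 2 * G 2 p $ i))"
    if "p \<in> U" for p i
    using DzV_cvf[OF has_partials_G(1)[OF that, of 0]] pd_G0[OF that] by (simp add: frame_col_simps)
  have dK: "has_partials (\<lambda>p. exp (u p) / sqrt 2) q (K * ux) (K * uy)"
    using has_partials_bounded_linear[OF bounded_linear_divide[of "sqrt 2"] has_partials_exp[OF has_partials_u[OF q]]]
    by (simp add: K_def ux_def uy_def)
  have re: "has_partials (\<lambda>p. exp (u p) / sqrt 2 * G 1 p $ i) q
      (K * pdx (G 1) q $ i + K * ux * G 1 q $ i) (K * pdy (G 1) q $ i + K * uy * G 1 q $ i)" for i
    using has_partials_mult[OF dK has_partials_vec_nth[OF has_partials_G(1)[OF q]]] by (simp add: K_def)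
  have im: "has_partials (\<lambda>p. - (exp (u p) / sqrt 2 * G 2 p $ i)) q
      (- (K * pdx (G 2) q $ i + K * ux * G 2 q $ i)) (- (K * pdy (G 2) q $ i + K * uy * G 2 q $ i))" for i
    using has_partials_minus[OF has_partials_mult[OF dK has_partials_vec_nth[OF has_partials_G(1)[OF q]]]]
    by (simp add: K_def)
  note Dz_Dzb_Complex[OF re im open_U q fz_U]
  then show
    "DzV (DzV (cvf f)) q = (\<chi> i. Complex
      (((1/2) *\<^sub>R ((K*ux) *\<^sub>R G 1 q + K *\<^sub>R pdx (G 1) q - (K*uy) *\<^sub>R G 2 q - K *\<^sub>R pdy (G 2) q)) $ i)
      (((1/2) *\<^sub>R (- (K*ux) *\<^sub>R G 2 q - K *\<^sub>R pdx (G 2) q - (K*uy) *\<^sub>R G 1 q - K *\<^sub>R pdy (G 1) q)) $ i))"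
    "DzbV (DzV (cvf f)) q = (\<chi> i. Complex
      (((1/2) *\<^sub>R ((K*ux) *\<^sub>R G 1 q + K *\<^sub>R pdx (G 1) q + (K*uy) *\<^sub>R G 2 q + K *\<^sub>R pdy (G 2) q)) $ i)
      (((1/2) *\<^sub>R (- (K*ux) *\<^sub>R G 2 q - K *\<^sub>R pdx (G 2) q + (K*uy) *\<^sub>R G 1 q + K *\<^sub>R pdy (G 1) q)) $ i))"
    unfolding DzV_def DzbV_def by (simp_all add: vec_eq_iff field_simps)
qed

lemma mtrapped_frame_form:
  assumes q: "q \<in> U"
  defines "K \<equiv> exp (u q) / sqrt 2" and "ux \<equiv> pdx u q" and "uy \<equiv> pdy u q"
  shows "(1/2) *\<^sub>R ((K*ux) *\<^sub>R G 1 q + K *\<^sub>R pdx (G 1) q + (K*uy) *\<^sub>R G 2 q + K *\<^sub>R pdy (G 2) q)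
       = (- exp (2 * u q)) *\<^sub>R G 0 q + (exp (2 * u q) * h q) *\<^sub>R (G 3 q + G 4 q)"
    "(1/2) *\<^sub>R (- (K*ux) *\<^sub>R G 2 q - K *\<^sub>R pdx (G 2) q + (K*uy) *\<^sub>R G 1 q + K *\<^sub>R pdy (G 1) q) = 0"
proof -
  have "Complex
      (((1/2) *\<^sub>R ((K*ux) *\<^sub>R G 1 q + K *\<^sub>R pdx (G 1) q + (K*uy) *\<^sub>R G 2 q + K *\<^sub>R pdy (G 2) q)) $ i)
      (((1/2) *\<^sub>R (- (K*ux) *\<^sub>R G 2 q - K *\<^sub>R pdx (G 2) q + (K*uy) *\<^sub>R G 1 q + K *\<^sub>R pdy (G 1) q)) $ i)
    = (- complex_of_real (exp (2 * u q)) *s cvf f q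
          + complex_of_real (exp (2 * u q) * h q) *s (cvf N1 q + cvf N2 q)) $ i" for i
    using arg_cong[OF mtrapped[OF q], of "\<lambda>v. v $ i"] Wirtinger_second_derivatives_f(2)[OF q]
    unfolding K_def ux_def uy_def by simp
  then show "(1/2) *\<^sub>R ((K*ux) *\<^sub>R G 1 q + K *\<^sub>R pdx (G 1) q + (K*uy) *\<^sub>R G 2 q + K *\<^sub>R pdy (G 2) q)
       = (- exp (2 * u q)) *\<^sub>R G 0 q + (exp (2 * u q) * h q) *\<^sub>R (G 3 q + G 4 q)"
    "(1/2) *\<^sub>R (- (K*ux) *\<^sub>R G 2 q - K *\<^sub>R pdx (G 2) q + (K*uy) *\<^sub>R G 1 q + K *\<^sub>R pdy (G 1) q) = 0"
    by (simp_all add: vec_eq_iff complex_eq_iff cvf_def frame_col_simps algebra_simps)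
qed

lemma xi_frame_form:
  assumes q: "q \<in> U"
  defines "K \<equiv> exp (u q) / sqrt 2" and "ux \<equiv> pdx u q" and "uy \<equiv> pdy u q"
  defines "X \<equiv> (1/2) *\<^sub>R ((K*ux) *\<^sub>R G 1 q + K *\<^sub>R pdx (G 1) q - (K*uy) *\<^sub>R G 2 q - K *\<^sub>R pdy (G 2) q)"
    and "Y \<equiv> (1/2) *\<^sub>R (- (K*ux) *\<^sub>R G 2 q - K *\<^sub>R pdx (G 2) q - (K*uy) *\<^sub>R G 1 q - K *\<^sub>R pdy (G 1) q)"
  shows "lor_real (G 3 q) X = Re (\<xi> q) + c" "lor_real (G 3 q) Y = Im (\<xi> q)"
    "lor_real (G 4 q) X = - Re (\<xi> q)" "lor_real (G 4 q) Y = - Im (\<xi> q)"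
proof -
  have D: "DzV (DzV (cvf f)) q = (\<chi> i. Complex (X $ i) (Y $ i))"
    using Wirtinger_second_derivatives_f(1)[OF q] unfolding X_def Y_def K_def ux_def uy_def .
  have "Complex (lor_real X (N1 q)) (lor_real Y (N1 q)) = \<xi> q + c"
    using xi1[OF q] unfolding D lor_Complex_cvf .
  moreover have "\<xi> q = - Complex (lor_real X (N2 q)) (lor_real Y (N2 q))"
    using xi2[OF q] unfolding D lor_Complex_cvf .
  ultimately show "lor_real (G 3 q) X = Re (\<xi> q) + c" "lor_real (G 3 q) Y = Im (\<xi> q)"
    "lor_real (G 4 q) X = - Re (\<xi> q)" "lor_real (G 4 q) Y = - Im (\<xi> q)"
    by (auto simp: complex_eq_iff lor_real_commute frame_col_simps)
qed

lemma parallel_frame_form: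
  assumes q: "q \<in> U" shows "lor_real (G 4 q) (pdx (G 3) q) = 0" "lor_real (G 4 q) (pdy (G 3) q) = 0"
proof -
  have "Complex (lor_real ((1/2) *\<^sub>R pdx (G 3) q) (N2 q)) (lor_real ((-1/2) *\<^sub>R pdy (G 3) q) (N2 q)) = 0"
    using parallel[OF q] DzV_cvf[OF has_partials_G(1)[OF q, of 3]]
    by (simp add: frame_col_simps lor_Complex_cvf[symmetric])
  then show "lor_real (G 4 q) (pdx (G 3) q) = 0" "lor_real (G 4 q) (pdy (G 3) q) = 0"
    by (auto simp: complex_eq_iff lor_real_commute lor_real_linear_simps frame_col_simps)
qed

lemma frame_structure_relations:
  assumes q: "q \<in> U"
  defines "K \<equiv> exp (u q) / sqrt 2" and "E \<equiv> exp (u q)" and "ux \<equiv> pdx u q" and "uy \<equiv> pdy u q"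
    and "TX \<equiv> \<lambda>i j. lor_real (G i q) (pdx (G j) q)" and "TY \<equiv> \<lambda>i j. lor_real (G i q) (pdy (G j) q)"
  shows "K * ux + K * TY 1 2 = 0"
    "K * TX 2 1 + K * uy = 0"
    "K * TX 3 1 + K * TY 3 2 = 2 * (E * E * h q)"
    "K * TY 3 1 - K * TX 3 2 = 0"
    "K * TX 4 1 + K * TY 4 2 = - 2 * (E * E * h q)"
    "K * TY 4 1 - K * TX 4 2 = 0"
    "K * TX 3 1 - K * TY 3 2 = 2 * (Re (\<xi> q) + c)"
    "- K * TX 3 2 - K * TY 3 1 = 2 * Im (\<xi> q)"
    "K * TX 4 1 - K * TY 4 2 = - 2 * Re (\<xi> q)"
    "- K * TX 4 2 - K * TY 4 1 = - 2 * Im (\<xi> q)"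
proof -
  note M = mtrapped_frame_form[OF q, folded K_def ux_def uy_def]
  note X = xi_frame_form[OF q, folded K_def ux_def uy_def]
  note simps = lor_real_linear_simps lor_real_G[OF q] lor_real_G_pd_self[OF q] exp_double TX_def TY_def
    E_def[symmetric]
  show "K * ux + K * TY 1 2 = 0"
    using arg_cong[OF M(1), of "lor_real (G 1 q)"] by (simp add: simps)
  show "K * TX 2 1 + K * uy = 0"
    using arg_cong[OF M(1), of "lor_real (G 2 q)"] by (simp add: simps)
  show "K * TX 3 1 + K * TY 3 2 = 2 * (E * E * h q)"
    using arg_cong[OF M(1), of "lor_real (G 3 q)"] by (simp add: simps)
  show "K * TX 4 1 + K * TY 4 2 = - 2 * (E * E * h q)"
    using arg_cong[OF M(1), of "lor_real (G 4 q)"] by (simp add: simps)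
  show "K * TY 3 1 - K * TX 3 2 = 0"
    using arg_cong[OF M(2), of "lor_real (G 3 q)"] by (simp add: simps)
  show "K * TY 4 1 - K * TX 4 2 = 0"
    using arg_cong[OF M(2), of "lor_real (G 4 q)"] by (simp add: simps)
  show "K * TX 3 1 - K * TY 3 2 = 2 * (Re (\<xi> q) + c)" using X(1) by (simp add: simps)
  show "- K * TX 3 2 - K * TY 3 1 = 2 * Im (\<xi> q)" using X(2) by (simp add: simps)
  show "K * TX 4 1 - K * TY 4 2 = - 2 * Re (\<xi> q)" using X(3) by (simp add: simps)
  show "- K * TX 4 2 - K * TY 4 1 = - 2 * Im (\<xi> q)" using X(4) by (simp add: simps)
qed

lemma Amat0_eq_param:
  fixes q assumes q: "q \<in> U"
  defines "a1 \<equiv> (of_real (inverse (exp (u q))) * (\<xi> q + of_real c) + of_real (exp (u q) * h q)) / of_real (sqrt 2)"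
    and "a2 \<equiv> (of_real (inverse (exp (u q))) * \<xi> q + of_real (exp (u q) * h q)) / of_real (sqrt 2)"
    and "H \<equiv> 2 * of_real (exp (u q) * h q) / of_real (sqrt 2)"
  shows "Amat c \<xi> h u 0 q = Amat_param (exp (u q)) (Complex (pdx u q / 2) (- pdy u q / 2)) a1 (a1 - H) a2 (a2 - H)"
proof -
  have "Dz (\<lambda>q. of_real (u q)) q = Complex (pdx u q / 2) (- pdy u q / 2)"
    using Dz_Dzb_has_partials[OF has_partials_of_real[OF has_partials_u[OF q]]] by (simp add: complex_eq_iff)
  then show ?thesis unfolding Amat_eq_param a1_def a2_def H_def by (simp add: exp_minus)
qed

lemma frame_log_derivative_entries:
  assumes q: "q \<in> U"
  shows "(\<chi> i j. sgnL i * lor_real (G i q) (pdx (G j) q)) = alpha (Amat c \<xi> h u 0 q) 1"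
    "(\<chi> i j. sgnL i * lor_real (G i q) (pdy (G j) q)) = alpha (Amat c \<xi> h u 0 q) \<i>"
proof -
  define TX where "TX i j = lor_real (G i q) (pdx (G j) q)" for i j
  define TY where "TY i j = lor_real (G i q) (pdy (G j) q)" for i j
  have "TX i 0 = (if i = 1 then 2 * (exp (u q) / sqrt 2) else 0)" for i
    using lor_real_G[OF q, of i 1] by (auto simp: TX_def pd_G0[OF q] lor_real.scaleR_right)
  moreover have "TY i 0 = (if i = 2 then 2 * (exp (u q) / sqrt 2) else 0)" for i
    using lor_real_G[OF q, of i 2] by (auto simp: TY_def pd_G0[OF q] lor_real.scaleR_right)
  moreover have "TX i j + TX j i = 0" "TY i j + TY j i = 0" for i j
    using lor_real_G_pd_skew[OF q] by (simp_all add: TX_def TY_def)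
  moreover have "TX 4 3 = 0" "TY 4 3 = 0"
    using parallel_frame_form[OF q] by (simp_all add: TX_def TY_def)
  ultimately show "(\<chi> i j. sgnL i * lor_real (G i q) (pdx (G j) q)) = alpha (Amat c \<xi> h u 0 q) 1"
    "(\<chi> i j. sgnL i * lor_real (G i q) (pdy (G j) q)) = alpha (Amat c \<xi> h u 0 q) \<i>"
    unfolding Amat0_eq_param[OF q] TX_def[symmetric] TY_def[symmetric]
    using structure_matrices_eq_alpha[where E = "exp (u q)" and K = "exp (u q) / sqrt 2" and TX = TX and TY = TY
      and hh = "h q" and x = "\<xi> q", OF _ _ _ _ _ _ frame_structure_relations[OF q, folded TX_def TY_def]]
    by simp_all
qed

lemma frame_inverse:
  assumes "q \<in> U" shows "(etaR ** transpose (Fr q) ** etaR) ** Fr q = mat 1"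
proof -
  have "(etaR ** transpose (Fr q) ** etaR) ** Fr q = etaR ** (transpose (Fr q) ** etaR ** Fr q)"
    by (simp add: matrix_mul_assoc)
  then show ?thesis using frame[OF assms] etaR_mult_etaR unfolding SOp41_def by simp
qed

lemma pd_Fr:
  assumes q: "q \<in> U"
  shows "pdx Fr q = (\<chi> i j. pdx (G j) q $ i)" "pdy Fr q = (\<chi> i j. pdy (G j) q $ i)"
    and has_partials_Fr: "has_partials Fr q (pdx Fr q) (pdy Fr q)"
proof -
  have d: "has_partials Fr q (\<chi> i j. pdx (G j) q $ i) (\<chi> i j. pdy (G j) q $ i)"
    by (intro has_partials_vec) (simp add: frameF_nth has_partials_vec_nth has_partials_G(1)[OF q])
  then show pd: "pdx Fr q = (\<chi> i j. pdx (G j) q $ i)" "pdy Fr q = (\<chi> i j. pdy (G j) q $ i)"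
    by (rule has_partials_imp_pdx_pdy)+
  from d show "has_partials Fr q (pdx Fr q) (pdy Fr q)" unfolding pd .
qed

lemma Fr_log_derivative:
  assumes q: "q \<in> U"
  shows "(etaR ** transpose (Fr q) ** etaR) ** pdx Fr q = alpha (Amat c \<xi> h u 0 q) 1"
    "(etaR ** transpose (Fr q) ** etaR) ** pdy Fr q = alpha (Amat c \<xi> h u 0 q) \<i>"
proof -
  have "column j (\<chi> i j. pdx (G j) q $ i) = pdx (G j) q" "column j (\<chi> i j. pdy (G j) q $ i) = pdy (G j) q"
    for j by (simp_all add: column_def vec_eq_iff)
  then have "((etaR ** transpose (Fr q) ** etaR) ** pdx Fr q) $ i $ j = sgnL i * lor_real (G i q) (pdx (G j) q)"
    "((etaR ** transpose (Fr q) ** etaR) ** pdy Fr q) $ i $ j = sgnL i * lor_real (G i q) (pdy (G j) q)" for i j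
    unfolding pd_Fr[OF q] etaR_gram_etaR_nth column_frameF by simp_all
  then show "(etaR ** transpose (Fr q) ** etaR) ** pdx Fr q = alpha (Amat c \<xi> h u 0 q) 1"
    "(etaR ** transpose (Fr q) ** etaR) ** pdy Fr q = alpha (Amat c \<xi> h u 0 q) \<i>"
    using frame_log_derivative_entries[OF q] by (simp_all add: vec_eq_iff)
qed

theorem Amat0_eq_Maurer_Cartan_form:
  assumes q: "q \<in> U"
  shows "alpha (Amat c \<xi> h u 0 q) v = matrix_inv (Fr q) ** frechet_derivative Fr (at q) v"
proof -
  have dFr: "frechet_derivative Fr (at q) v = Re v *\<^sub>R pdx Fr q + Im v *\<^sub>R pdy Fr q"
    using has_partials_imp_frechet_derivative[OF has_partials_Fr[OF q]] by simp
  show ?thesis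
    unfolding dFr matrix_inv_eq_left_inverse[OF frame_inverse[OF q]] matrix_add_ldistrib matrix_scalar_ac
      scalar_matrix_assoc[symmetric] Fr_log_derivative[OF q]
    by (rule alpha_eq_Re_Im)
qed

lemma has_partials_pd_Fr:
  assumes p: "p \<in> U"
  shows "has_partials (pdx Fr) p (\<chi> i j. pdx (pdx (G j)) p $ i) (\<chi> i j. pdx (pdy (G j)) p $ i)"
    "has_partials (pdy Fr) p (\<chi> i j. pdx (pdy (G j)) p $ i) (\<chi> i j. pdy (pdy (G j)) p $ i)"
proof -
  have "has_partials (\<lambda>q. pdx (G j) q $ i) p (pdx (pdx (G j)) p $ i) (pdx (pdy (G j)) p $ i)" for i j
  proof -
    have sym: "pdy (pdx (G j)) p $ i = pdx (pdy (G j)) p $ i"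
      using mixed_partials_eq[OF open_U p, of "\<lambda>q. G j q $ i" "\<lambda>q. pdx (G j) q $ i" "\<lambda>q. pdy (G j) q $ i"]
        has_partials_vec_nth has_partials_G p by blast
    from has_partials_vec_nth[OF has_partials_G(2)[OF p, of j], of i] show ?thesis unfolding sym .
  qed
  then have "has_partials (\<lambda>q. \<chi> i j. pdx (G j) q $ i) p (\<chi> i j. pdx (pdx (G j)) p $ i) (\<chi> i j. pdx (pdy (G j)) p $ i)"
    by (intro has_partials_vec) simp
  then show "has_partials (pdx Fr) p (\<chi> i j. pdx (pdx (G j)) p $ i) (\<chi> i j. pdx (pdy (G j)) p $ i)"
    by (rule has_partials_transform_open[OF _ open_U p]) (simp add: pd_Fr)
  have "has_partials (\<lambda>q. \<chi> i j. pdy (G j) q $ i) p (\<chi> i j. pdx (pdy (G j)) p $ i) (\<chi> i j. pdy (pdy (G j)) p $ i)"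
    by (intro has_partials_vec) (simp add: has_partials_vec_nth has_partials_G(3)[OF p])
  then show "has_partials (pdy Fr) p (\<chi> i j. pdx (pdy (G j)) p $ i) (\<chi> i j. pdy (pdy (G j)) p $ i)"
    by (rule has_partials_transform_open[OF _ open_U p]) (simp add: pd_Fr)
qed

lemma Fr_log_derivative_zero_curvature:
  assumes p: "p \<in> U"
  defines "Ax \<equiv> \<lambda>q. (etaR ** transpose (Fr q) ** etaR) ** pdx Fr q"
    and "Ay \<equiv> \<lambda>q. (etaR ** transpose (Fr q) ** etaR) ** pdy Fr q"
  shows "zero_curvature_at Ax Ay p" "Ax differentiable (at p)" "Ay differentiable (at p)"
proof -
  have "has_partials (\<lambda>q. etaR ** transpose (Fr q) ** etaR) p
      (etaR ** transpose (Fr p) ** 0 + (etaR ** transpose (pdx Fr p) + 0 ** transpose (Fr p)) ** etaR)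
      (etaR ** transpose (Fr p) ** 0 + (etaR ** transpose (pdy Fr p) + 0 ** transpose (Fr p)) ** etaR)"
    by (intro has_partials_matrix_mult has_partials_const has_partials_transpose has_partials_Fr p)
  then have dFinv: "has_partials (\<lambda>q. etaR ** transpose (Fr q) ** etaR) p
      (etaR ** transpose (pdx Fr p) ** etaR) (etaR ** transpose (pdy Fr p) ** etaR)"
    by simp
  show "zero_curvature_at Ax Ay p"
    unfolding Ax_def Ay_def
    by (rule zero_curvature_at_logarithmic_derivative[OF open_U p frame_inverse has_partials_Fr dFinv
          has_partials_pd_Fr[OF p]])
  show "Ax differentiable (at p)" "Ay differentiable (at p)"
    unfolding Ax_def Ay_def
    using has_partials_imp_differentiable[OF has_partials_matrix_mult[OF dFinv has_partials_pd_Fr(1)[OF p]]]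
      has_partials_imp_differentiable[OF has_partials_matrix_mult[OF dFinv has_partials_pd_Fr(2)[OF p]]] .
qed

theorem zero_curvature_Amat:
  assumes p: "p \<in> U"
  shows "zero_curvature_at (\<lambda>q. alpha (Amat c \<xi> h u t q) 1) (\<lambda>q. alpha (Amat c \<xi> h u t q) \<i>) p"
proof -
  define Ax where "Ax q = (etaR ** transpose (Fr q) ** etaR) ** pdx Fr q" for q
  define Ay where "Ay q = (etaR ** transpose (Fr q) ** etaR) ** pdy Fr q" for q
  define k where "k q = exp (u q) * (t / (2 * c) / sqrt 2)" for q
  define Mx where "Mx = alpha Mdeform 1"
  define My where "My = alpha Mdeform \<i>"
  note flat = Fr_log_derivative_zero_curvature[OF p, folded Ax_def[abs_def] Ay_def[abs_def]]
  have "has_partials k p (k p * pdx u p) (k p * pdy u p)"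
    unfolding k_def
    by (rule has_partials_cong[OF has_partials_mult[OF has_partials_exp[OF has_partials_u[OF p]] has_partials_const]])
      simp_all
  moreover have "(k p * pdx u p) *\<^sub>R My - (k p * pdy u p) *\<^sub>R Mx
      + k p *\<^sub>R ((Ax p ** My - My ** Ax p) + (Mx ** Ay p - Ay p ** Mx)) = 0"
  proof -
    have "pdx u p *\<^sub>R My - pdy u p *\<^sub>R Mx
      + (Ax p ** My - My ** Ax p) + (Mx ** Ay p - Ay p ** Mx) = 0"
      unfolding Ax_def Ay_def Mx_def My_def Fr_log_derivative[OF p] Amat0_eq_param[OF p]
      by (rule Amat_param_Mdeform_bracket)
    then show ?thesis
      by (simp only: scaleR_scaleR[symmetric] scaleR_right_diff_distrib[symmetric]
          scaleR_right_distrib[symmetric] add.assoc scaleR_zero_right)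
  qed
  ultimately have "zero_curvature_at (\<lambda>q. Ax q + k q *\<^sub>R Mx) (\<lambda>q. Ay q + k q *\<^sub>R My) p"
    using zero_curvature_at_deform[OF flat] Mdeform_commute unfolding Mx_def My_def by blast
  moreover have "alpha (Amat c \<xi> h u t q) 1 = Ax q + k q *\<^sub>R Mx"
    "alpha (Amat c \<xi> h u t q) \<i> = Ay q + k q *\<^sub>R My" if "q \<in> U" for q
    unfolding Ax_def Ay_def Mx_def My_def k_def Amat_deform[of c \<xi> h u t q] alpha_add alpha_scaleR
      Fr_log_derivative[OF that] by simp_all
  ultimately show ?thesis
    using zero_curvature_at_cong[OF open_U p, of "\<lambda>q. alpha (Amat c \<xi> h u t q) 1"
        "\<lambda>q. Ax q + k q *\<^sub>R Mx" "\<lambda>q. alpha (Amat c \<xi> h u t q) \<i>"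
        "\<lambda>q. Ay q + k q *\<^sub>R My"] by simp
qed

end

theorem mainTheorem16:
  fixes U :: "complex set"
    and f F1 F2 N1 N2 :: "complex \<Rightarrow> real^5"
    and u h :: "complex \<Rightarrow> real"
    and \<xi> :: "complex \<Rightarrow> complex"
    and c :: real
  assumes U: "open U" "connected U" "simply_connected U"
    and smooth: "Cinf_on U f" "Cinf_on U F1" "Cinf_on U F2" "Cinf_on U N1" "Cinf_on U N2"
       "Cinf_on U u" "Cinf_on U h"
    and frame: "\<And>p. p \<in> U \<Longrightarrow> SOp41 (frameF f F1 F2 N1 N2 p)"
    and fz: "\<And>p. p \<in> U \<Longrightarrow> DzV (cvf f) p
        = complex_of_real (exp (u p) / sqrt 2) *s (cvf F1 p - \<i> *s cvf F2 p)"
    and conformal: "\<And>p. p \<in> U \<Longrightarrow>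
        lor (DzV (cvf f) p) (DzbV (cvf f) p) = complex_of_real (exp (2 * u p))"
    and xi2: "\<And>p. p \<in> U \<Longrightarrow> \<xi> p = - lor (DzV (DzV (cvf f)) p) (cvf N2 p)"
    and xi1: "\<And>p. p \<in> U \<Longrightarrow> lor (DzV (DzV (cvf f)) p) (cvf N1 p) = \<xi> p + complex_of_real c"
    and c: "c \<noteq> 0"
    and mtrapped: "\<And>p. p \<in> U \<Longrightarrow> DzbV (DzV (cvf f)) p
        = - complex_of_real (exp (2 * u p)) *s cvf f p
          + complex_of_real (exp (2 * u p) * h p) *s (cvf N1 p + cvf N2 p)"
    and nonisotropic: "\<And>p. p \<in> U \<Longrightarrow> (\<xi> p + complex_of_real c)\<^sup>2 - (\<xi> p)\<^sup>2 \<noteq> 0"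
    and parallel: "\<And>p. p \<in> U \<Longrightarrow> lor (DzV (cvf N1) p) (cvf N2 p) = 0"
  shows "\<forall>t::real. \<forall>p\<in>U.
      (\<forall>v. so41 (alpha (Amat c \<xi> h u t p) v))
    \<and> (t = 0 \<longrightarrow> (\<forall>v. alpha (Amat c \<xi> h u 0 p) v
          = matrix_inv (frameF f F1 F2 N1 N2 p)
            ** frechet_derivative (frameF f F1 F2 N1 N2) (at p) v))
    \<and> pdx (\<lambda>q. alpha (Amat c \<xi> h u t q) \<i>) p - pdy (\<lambda>q. alpha (Amat c \<xi> h u t q) 1) p
      + (alpha (Amat c \<xi> h u t p) 1 ** alpha (Amat c \<xi> h u t p) \<i>
         - alpha (Amat c \<xi> h u t p) \<i> ** alpha (Amat c \<xi> h u t p) 1) = 0"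
proof -
  interpret marginally_trapped_frame U f F1 F2 N1 N2 u h \<xi> c
    using U(1) smooth(1-6) frame fz xi2 xi1 mtrapped parallel
    by unfold_locales (auto simp: Cinf_on_def)
  show ?thesis
    using so41_alpha_Amat Amat0_eq_Maurer_Cartan_form zero_curvature_Amat
    unfolding zero_curvature_at_def by blast
qed

end
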